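(* Let $(\Omega,\mathcal{F})$ be a measurable space and $T:\Omega\to\Omega$ a measurable map. Let $\mathbb{V}(A)=\sup_{P\in\Theta}P(A)$, $A\in\mathcal{F}$, be an upper probability, where $\Theta=\{P \text{ probability on }(\Omega,\mathcal{F}) : P(A)\le \mathbb{V}(A)\ \forall A\in\mathcal{F}\}$. Assume $\mathbb{V}$ is continuous (from above), $T$-invariant, and $T$-ergodic. Let $\Theta_0$ be the set of $T$-invariant probabilities in $\Theta$, and let $\mathbb{E}^0[\eta]=\sup_{Q\in\Theta_0}E_Q[\eta]$ for bounded measurable $\eta$. Then for every $P\in\Theta$ and every bounded $\mathcal{F}$-measurable $\xi:\Omega\to\mathbb{R}$, the limit $\lim_{n\to\infty}\frac1n\sum_{k=0}^{n-1}\xi(T^k\omega)$ exists $P$-a.s. and $$-\mathbb{E}^0[-\xi]\le \lim_{n\to\infty}\frac1n\sum_{k=0}^{n-1}\xi(T^k\omega)\le \mathbb{E}^0[\xi],\quad P\text{-a.s.}$$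
   Context: $\mathcal{I}=\{A\in\mathcal{F}: T^{-1}A=A\}$ is the $T$-invariant $\sigma$-algebra. $\mathbb{V}$ is continuous if $\mathbb{V}(A_n)\to 0$ whenever $A_n\in\mathcal{F}$, $A_n\downarrow\emptyset$. $\mathbb{V}$ is $T$-invariant if $\mathbb{V}(T^{-1}A)=\mathbb{V}(A)$ for all $A\in\mathcal{F}$. A continuous upper probability $\mathbb{V}$ is $T$-ergodic if $\mathbb{V}(A)\in\{0,1\}$ for every $A\in\mathcal{I}$. A probability $P$ is $T$-invariant if $P(T^{-1}A)=P(A)$ for all $A\in\mathcal{F}$. *)

theory Defs
  imports "HOL-Probability.Probability"
begin

definition dominated_probs :: "'a measure \<Rightarrow> ('a set \<Rightarrow> real) \<Rightarrow> 'a measure set" where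
  "dominated_probs M V =
     {P. prob_space P \<and> sets P = sets M \<and> (\<forall>A\<in>sets M. measure P A \<le> V A)}"

definition invariant_sets :: "'a measure \<Rightarrow> ('a \<Rightarrow> 'a) \<Rightarrow> 'a set set" where
  "invariant_sets M T = {A \<in> sets M. T -` A \<inter> space M = A}"

definition upper_continuous :: "'a measure \<Rightarrow> ('a set \<Rightarrow> real) \<Rightarrow> bool" where
  "upper_continuous M V \<longleftrightarrow>
     (\<forall>An :: nat \<Rightarrow> 'a set. range An \<subseteq> sets M \<longrightarrow> decseq An \<longrightarrow> (\<Inter>n. An n) = {}
        \<longrightarrow> (\<lambda>n. V (An n)) \<longlonglongrightarrow> 0)"

definition V_invariant :: "'a measure \<Rightarrow> ('a \<Rightarrow> 'a) \<Rightarrow> ('a set \<Rightarrow> real) \<Rightarrow> bool" where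
  "V_invariant M T V \<longleftrightarrow> (\<forall>A\<in>sets M. V (T -` A \<inter> space M) = V A)"

definition V_ergodic :: "'a measure \<Rightarrow> ('a \<Rightarrow> 'a) \<Rightarrow> ('a set \<Rightarrow> real) \<Rightarrow> bool" where
  "V_ergodic M T V \<longleftrightarrow> upper_continuous M V \<and> (\<forall>A\<in>invariant_sets M T. V A \<in> {0, 1})"

definition prob_invariant :: "'a measure \<Rightarrow> ('a \<Rightarrow> 'a) \<Rightarrow> bool" where
  "prob_invariant P T \<longleftrightarrow> (\<forall>A\<in>sets P. measure P (T -` A \<inter> space P) = measure P A)"

definition invariant_dominated_probs ::
  "'a measure \<Rightarrow> ('a \<Rightarrow> 'a) \<Rightarrow> ('a set \<Rightarrow> real) \<Rightarrow> 'a measure set" where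
  "invariant_dominated_probs M T V = {Q \<in> dominated_probs M V. prob_invariant Q T}"

definition upper_exp0 ::
  "'a measure \<Rightarrow> ('a \<Rightarrow> 'a) \<Rightarrow> ('a set \<Rightarrow> real) \<Rightarrow> ('a \<Rightarrow> real) \<Rightarrow> real" where
  "upper_exp0 M T V \<eta> = (SUP Q \<in> invariant_dominated_probs M T V. integral\<^sup>L Q \<eta>)"

end

theory Submission
  imports Defs
begin

text \<open>
  For \<open>P \<in> \<Theta>\<close>, the Cesaro averages of the image measures \<open>P \<circ> T\<^sup>-\<^sup>k\<close> have a cluster point in
  the compact cube \<open>[0,1]\<^sup>\<F>\<close>. It is a finitely additive, \<open>T\<close>-invariant set function dominated by \<open>V\<close>;
  continuity of \<open>V\<close> makes it a probability \<open>Q \<in> \<Theta>\<^sub>0\<close>, and \<open>Q\<close> agrees with \<open>P\<close> on invariant sets.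

  For an invariant probability \<open>Q\<close> and bounded \<open>\<xi>\<close>, the Katznelson--Weiss form of the maximal
  inequality gives \<open>E\<^sub>Q[\<xi>\<^sup>*] \<le> E\<^sub>Q[\<xi>]\<close> for the limsup \<open>\<xi>\<^sup>*\<close> of the Birkhoff averages. Applied to \<open>\<xi>\<close>
  and \<open>-\<xi>\<close>, the nonnegative invariant function \<open>\<xi>\<^sup>* + (-\<xi>)\<^sup>*\<close> (limsup minus liminf) has \<open>Q\<close>-integral
  \<open>\<le> 0\<close>; the invariant set where it is positive is \<open>Q\<close>-null, hence \<open>P\<close>-null, and the averages
  converge \<open>P\<close>-a.s. For the bound, the invariant set \<open>A = {\<xi>\<^sup>* > E\<^sup>0[\<xi>] + \<epsilon>}\<close> has \<open>Q(A) \<le> \<theta> < 1\<close> for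
  all \<open>Q \<in> \<Theta>\<^sub>0\<close>, so \<open>R(A) \<le> \<theta>\<close> for all \<open>R \<in> \<Theta>\<close> and \<open>V(A) < 1\<close>; ergodicity forces \<open>V(A) = 0\<close>,
  hence \<open>P(A) = 0\<close>. The lower bound is the upper bound for \<open>-\<xi>\<close>.
\<close>

lemma (in finite_measure) integrable_bounded_real:
  fixes f :: "'a \<Rightarrow> real"
  assumes "f \<in> borel_measurable M" "\<And>x. x \<in> space M \<Longrightarrow> \<bar>f x\<bar> \<le> C"
  shows "integrable M f"
  using assms by (intro integrable_const_bound[where B = C] AE_I2) auto

lemma (in prob_space) integral_ge_superlevel:
  fixes f :: "'a \<Rightarrow> real"
  assumes "integrable M f" "A \<in> events"
    and "\<And>x. x \<in> space M \<Longrightarrow> - B \<le> f x" "\<And>x. x \<in> A \<Longrightarrow> a \<le> f x"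
  shows "(a + B) * prob A - B \<le> expectation f"
proof -
  have indicator_integrable: "integrable M (\<lambda>x. (a + B) * indicator A x - B)"
    using assms(2) by (simp add: emeasure_eq_measure)
  have "(a + B) * prob A - B = expectation (\<lambda>x. (a + B) * indicator A x - B)"
    using assms(2) indicator_integrable by (simp add: emeasure_eq_measure prob_space)
  also have "\<dots> \<le> expectation f"
    using assms indicator_integrable by (intro integral_mono) (auto simp: indicator_def)
  finally show ?thesis .
qed

lemma funpow_in_space:
  assumes "T \<in> measurable M M" "x \<in> space M"
  shows "(T ^^ k) x \<in> space M"
  using measurable_space[OF measurable_compose_n[OF assms(1)] assms(2)] .

lemma vimage_funpow_Suc:
  assumes "T \<in> measurable M M"
  shows "(T ^^ Suc k) -` A \<inter> space M = T -` ((T ^^ k) -` A \<inter> space M) \<inter> space M"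
  using measurable_space[OF assms] by (auto simp del: funpow.simps simp: funpow_Suc_right)

lemma vimage_funpow_vimage:
  assumes "T \<in> measurable M M"
  shows "(T ^^ k) -` (T -` A \<inter> space M) \<inter> space M = (T ^^ Suc k) -` A \<inter> space M"
  using funpow_in_space[OF assms] measurable_space[OF assms] by (intro set_eqI iffI) simp_all

lemma V_invariant_funpow:
  assumes "T \<in> measurable M M" "V_invariant M T V" "A \<in> sets M"
  shows "V ((T ^^ k) -` A \<inter> space M) = V A"
proof (induction k)
  case 0
  then show ?case using sets.sets_into_space[OF assms(3)] by (simp add: Int_absorb2)
next
  case (Suc k)
  have "(T ^^ k) -` A \<inter> space M \<in> sets M"
    using measurable_compose_n[OF assms(1)] assms(3) by (rule measurable_sets)
  then show ?case
    using Suc assms(2) unfolding V_invariant_def vimage_funpow_Suc[OF assms(1)] by metis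
qed

lemma invariant_sets_funpow:
  assumes "T \<in> measurable M M" "A \<in> invariant_sets M T"
  shows "(T ^^ k) -` A \<inter> space M = A"
proof (induction k)
  case 0
  then show ?case using assms(2) sets.sets_into_space by (auto simp: invariant_sets_def)
next
  case (Suc k)
  have "T -` A \<inter> space M = A" using assms(2) by (simp add: invariant_sets_def)
  then show ?case unfolding vimage_funpow_Suc[OF assms(1)] Suc .
qed

lemma invariant_sets_superlevel:
  fixes f :: "'a \<Rightarrow> real"
  assumes T_meas: "T \<in> measurable M M" and [measurable]: "f \<in> borel_measurable M"
    and f_invariant: "\<And>x. x \<in> space M \<Longrightarrow> f (T x) = f x"
  shows "{x \<in> space M. c < f x} \<in> invariant_sets M T"
  using f_invariant measurable_space[OF T_meas] by (auto simp: invariant_sets_def)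

lemma dominated_probsD:
  assumes "P \<in> dominated_probs M V"
  shows "prob_space P" "sets P = sets M" "space P = space M"
  using assms sets_eq_imp_space_eq by (auto simp: dominated_probs_def)

lemma invariant_dominated_probsD:
  assumes "Q \<in> invariant_dominated_probs M T V"
  shows "prob_space Q" "sets Q = sets M" "space Q = space M" "prob_invariant Q T"
  using assms sets_eq_imp_space_eq
  by (auto simp: invariant_dominated_probs_def dominated_probs_def)

lemma measurable_invariant_dominated:
  assumes "Q \<in> invariant_dominated_probs M T V"
  shows "measurable Q N = measurable M N" and "measurable N Q = measurable N M"
  using measurable_cong_sets invariant_dominated_probsD(2)[OF assms] by blast+

lemma integrable_invariant_dominated:
  fixes f :: "'a \<Rightarrow> real"
  assumes Q: "Q \<in> invariant_dominated_probs M T V"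
    and "f \<in> borel_measurable M" "\<And>x. x \<in> space M \<Longrightarrow> \<bar>f x\<bar> \<le> C"
  shows "integrable Q f"
proof -
  note Q_facts = invariant_dominated_probsD[OF Q]
  interpret Q: prob_space Q by (rule Q_facts(1))
  show ?thesis
    using assms by (intro Q.integrable_bounded_real) (auto simp: Q_facts(3) measurable_invariant_dominated[OF Q])
qed

lemma integral_le_upper_exp0:
  fixes g :: "'a \<Rightarrow> real"
  assumes Q: "Q \<in> invariant_dominated_probs M T V"
    and g_meas: "g \<in> borel_measurable M" and bounded: "\<And>x. x \<in> space M \<Longrightarrow> \<bar>g x\<bar> \<le> B"
  shows "integral\<^sup>L Q g \<le> upper_exp0 M T V g"
  unfolding upper_exp0_def
proof (rule cSUP_upper[OF Q], rule bdd_aboveI2)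
  fix R assume R: "R \<in> invariant_dominated_probs M T V"
  interpret R: prob_space R
    using invariant_dominated_probsD(1)[OF R] .
  have "integral\<^sup>L R g \<le> integral\<^sup>L R (\<lambda>_. B)"
    using bounded invariant_dominated_probsD(3)[OF R]
    by (intro integral_mono integrable_invariant_dominated[OF R g_meas bounded]) (auto simp: abs_le_iff)
  then show "integral\<^sup>L R g \<le> B"
    by (simp add: R.prob_space)
qed

section \<open>Invariant probabilities agreeing with a given one on invariant sets\<close>

lemma compact_cluster_point:
  fixes f :: "'b \<Rightarrow> 'c::topological_space"
  assumes "compact K" "eventually (\<lambda>n. f n \<in> K) F" "F \<noteq> bot"
  obtains q where "\<And>S. closed S \<Longrightarrow> eventually (\<lambda>n. f n \<in> S) F \<Longrightarrow> q \<in> S"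
proof -
  have "filtermap f F \<noteq> bot" "eventually (\<lambda>x. x \<in> K) (filtermap f F)"
    using assms by (simp_all add: filtermap_bot_iff eventually_filtermap)
  then obtain q where q: "inf (nhds q) (filtermap f F) \<noteq> bot"
    using assms(1) unfolding compact_filter by blast
  show ?thesis
  proof (rule that, rule ccontr)
    fix S assume S: "closed S" "eventually (\<lambda>n. f n \<in> S) F" "q \<notin> S"
    have "eventually (\<lambda>x. x \<in> - S) (nhds q)"
      using S by (intro eventually_nhds_in_open) auto
    moreover have "eventually (\<lambda>x. x \<in> S) (filtermap f F)"
      using S by (simp add: eventually_filtermap)
    ultimately have "eventually (\<lambda>x. False) (inf (nhds q) (filtermap f F))"
      unfolding eventually_inf by blast
    then show False using q by (simp add: eventually_False)
  qed
qed

lemma dominated_additive_prob: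
  fixes q :: "'a set \<Rightarrow> real"
  assumes V_cont: "upper_continuous M V"
    and nonneg: "\<And>A. A \<in> sets M \<Longrightarrow> 0 \<le> q A"
    and dominated: "\<And>A. A \<in> sets M \<Longrightarrow> q A \<le> V A"
    and additive: "\<And>A B. A \<in> sets M \<Longrightarrow> B \<in> sets M \<Longrightarrow> A \<inter> B = {} \<Longrightarrow> q (A \<union> B) = q A + q B"
    and normalized: "q (space M) = 1"
  obtains Q where "prob_space Q" "sets Q = sets M" "\<And>A. A \<in> sets M \<Longrightarrow> measure Q A = q A"
proof -
  define f where "f A = ennreal (q A)" for A
  have "q {} = 0" using additive[of "{}" "{}"] by simp
  then have pos: "positive (sets M) f" by (simp add: positive_def f_def)
  have add: "additive (sets M) f"
    unfolding additive_def f_def using additive nonneg by (metis ennreal_plus)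
  \<comment> \<open>Continuity from above of \<open>V\<close> is inherited by \<open>q \<le> V\<close>, and gives \<sigma>-additivity.\<close>
  have "countably_additive (sets M) f"
  proof (rule sets.empty_continuous_imp_countably_additive[OF pos add])
    fix A :: "nat \<Rightarrow> 'a set" assume A: "range A \<subseteq> sets M" "decseq A" "(\<Inter>i. A i) = {}"
    then have "(\<lambda>i. V (A i)) \<longlonglongrightarrow> 0" using V_cont unfolding upper_continuous_def by blast
    then have "(\<lambda>i. q (A i)) \<longlonglongrightarrow> 0"
      by (rule tendsto_sandwich[OF _ _ tendsto_const, rotated 2])
        (use A(1) nonneg dominated in \<open>auto intro!: always_eventually\<close>)
    then show "(\<lambda>i. f (A i)) \<longlonglongrightarrow> 0"
      unfolding f_def using tendsto_ennrealI[of "\<lambda>i. q (A i)" 0] by simp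
  qed (simp add: f_def)
  then have emeasure_Q: "emeasure (measure_of (space M) (sets M) f) A = f A" if "A \<in> sets M" for A
    using emeasure_measure_of_sigma[OF sets.sigma_algebra_axioms pos _ that] by simp
  show ?thesis
  proof (rule that)
    show "sets (measure_of (space M) (sets M) f) = sets M"
      by (simp add: sets.space_closed sets.sigma_sets_eq)
    show "measure (measure_of (space M) (sets M) f) A = q A" if "A \<in> sets M" for A
      using emeasure_Q[OF that] nonneg[OF that] by (simp add: measure_def f_def)
    show "prob_space (measure_of (space M) (sets M) f)"
      by (rule prob_spaceI) (simp add: emeasure_Q f_def normalized)
  qed
qed

definition cesaro_vimage_measure :: "'a measure \<Rightarrow> ('a \<Rightarrow> 'a) \<Rightarrow> nat \<Rightarrow> 'a set \<Rightarrow> real" where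
  "cesaro_vimage_measure P T n A =
     (\<Sum>k<Suc n. measure P ((T ^^ k) -` A \<inter> space P)) / real (Suc n)"

context
  fixes M :: "'a measure" and T :: "'a \<Rightarrow> 'a" and P :: "'a measure"
  assumes T_meas: "T \<in> measurable M M" and prob_P: "prob_space P" and sets_P: "sets P = sets M"
begin

interpretation P: prob_space P by (rule prob_P)

lemma cesaro_vimage_measure_bounds: "cesaro_vimage_measure P T n A \<in> {0..1}"
proof -
  have "(\<Sum>k<Suc n. P.prob ((T ^^ k) -` A \<inter> space P)) \<le> (\<Sum>k<Suc n. 1)"
    by (intro sum_mono) simp
  moreover have "0 \<le> (\<Sum>k<Suc n. P.prob ((T ^^ k) -` A \<inter> space P))"
    by (intro sum_nonneg measure_nonneg)
  ultimately show ?thesis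
    by (simp add: cesaro_vimage_measure_def del: sum.lessThan_Suc)
qed

lemma cesaro_vimage_measure_le_V:
  assumes "P \<in> dominated_probs M V" "V_invariant M T V" "A \<in> sets M"
  shows "cesaro_vimage_measure P T n A \<le> V A"
proof -
  have "P.prob ((T ^^ k) -` A \<inter> space M) \<le> V A" for k
    using assms measurable_sets[OF measurable_compose_n[OF T_meas] assms(3), of k]
      V_invariant_funpow[OF T_meas assms(2,3), of k]
    by (auto simp: dominated_probs_def)
  then have "(\<Sum>k<Suc n. P.prob ((T ^^ k) -` A \<inter> space M)) \<le> real (Suc n) * V A"
    using sum_mono[of "{..<Suc n}" "\<lambda>k. P.prob ((T ^^ k) -` A \<inter> space M)" "\<lambda>_. V A"] by simp
  then show ?thesis
    by (simp add: cesaro_vimage_measure_def sets_eq_imp_space_eq[OF sets_P] field_simps)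
qed

lemma cesaro_vimage_measure_Un:
  assumes "A \<in> sets M" "B \<in> sets M" "A \<inter> B = {}"
  shows "cesaro_vimage_measure P T n (A \<union> B) =
           cesaro_vimage_measure P T n A + cesaro_vimage_measure P T n B"
proof -
  have "P.prob ((T ^^ k) -` (A \<union> B) \<inter> space M) =
          P.prob ((T ^^ k) -` A \<inter> space M) + P.prob ((T ^^ k) -` B \<inter> space M)" for k
  proof -
    have "(T ^^ k) -` (A \<union> B) \<inter> space M = ((T ^^ k) -` A \<inter> space M) \<union> ((T ^^ k) -` B \<inter> space M)"
      by blast
    moreover have "(T ^^ k) -` X \<inter> space M \<in> sets P" if "X \<in> sets M" for X
      using measurable_sets[OF measurable_compose_n[OF T_meas] that] sets_P by simp
    ultimately show ?thesis
      using assms by (simp add: P.finite_measure_Union disjoint_iff)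
  qed
  then show ?thesis
    by (simp add: cesaro_vimage_measure_def sets_eq_imp_space_eq[OF sets_P] sum.distrib
        add_divide_distrib)
qed

lemma cesaro_vimage_measure_space: "cesaro_vimage_measure P T n (space M) = 1"
proof -
  have "(T ^^ k) -` space M \<inter> space M = space M" for k
    using funpow_in_space[OF T_meas] by auto
  then show ?thesis
    using P.prob_space by (simp add: cesaro_vimage_measure_def sets_eq_imp_space_eq[OF sets_P])
qed

lemma cesaro_vimage_measure_invariant_set:
  assumes "A \<in> invariant_sets M T"
  shows "cesaro_vimage_measure P T n A = P.prob A"
  using invariant_sets_funpow[OF T_meas assms]
  by (simp add: cesaro_vimage_measure_def sets_eq_imp_space_eq[OF sets_P])

lemma cesaro_vimage_measure_vimage:
  "\<bar>cesaro_vimage_measure P T n (T -` A \<inter> space M) - cesaro_vimage_measure P T n A\<bar>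
     \<le> inverse (real (Suc n))"
proof -
  have "(\<Sum>k<Suc n. P.prob ((T ^^ k) -` (T -` A \<inter> space M) \<inter> space M))
          - (\<Sum>k<Suc n. P.prob ((T ^^ k) -` A \<inter> space M))
        = P.prob ((T ^^ Suc n) -` A \<inter> space M) - P.prob ((T ^^ 0) -` A \<inter> space M)"
    unfolding vimage_funpow_vimage[OF T_meas] sum_subtractf[symmetric]
    by (rule sum_lessThan_telescope)
  moreover have "\<bar>P.prob X - P.prob Y\<bar> \<le> 1" for X Y
    using P.prob_le_1[of X] P.prob_le_1[of Y] measure_nonneg[of P X] measure_nonneg[of P Y]
    by linarith
  ultimately have "\<bar>(\<Sum>k<Suc n. P.prob ((T ^^ k) -` (T -` A \<inter> space M) \<inter> space M))
          - (\<Sum>k<Suc n. P.prob ((T ^^ k) -` A \<inter> space M))\<bar> \<le> 1"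
    by metis
  then show ?thesis
    unfolding cesaro_vimage_measure_def sets_eq_imp_space_eq[OF sets_P]
      diff_divide_distrib[symmetric] abs_divide
    by (simp add: divide_inverse mult_left_le_one_le)
qed

lemma cesaro_vimage_measure_limit_point:
  obtains q :: "'a set \<Rightarrow> real"
  where "\<And>\<phi> \<psi> :: ('a set \<Rightarrow> real) \<Rightarrow> real. continuous_on UNIV \<phi> \<Longrightarrow> continuous_on UNIV \<psi> \<Longrightarrow>
    eventually (\<lambda>n. \<phi> (cesaro_vimage_measure P T n) \<le> \<psi> (cesaro_vimage_measure P T n)) sequentially \<Longrightarrow>
    \<phi> q \<le> \<psi> q"
proof -
  have "compactin (product_topology (\<lambda>_. euclidean) UNIV) (PiE UNIV (\<lambda>_::'a set. {0..1::real}))"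
    by (simp add: compactin_PiE)
  then have compact: "compact (PiE UNIV (\<lambda>_::'a set. {0..1::real}))"
    by (simp add: euclidean_product_topology)
  have "eventually (\<lambda>n. cesaro_vimage_measure P T n \<in> PiE UNIV (\<lambda>_. {0..1})) sequentially"
    using cesaro_vimage_measure_bounds by (auto simp: PiE_iff)
  then obtain q where
    q: "\<And>S. closed S \<Longrightarrow> eventually (\<lambda>n. cesaro_vimage_measure P T n \<in> S) sequentially \<Longrightarrow> q \<in> S"
    using compact_cluster_point[OF compact _ sequentially_bot] by blast
  show ?thesis
    by (rule that) (use q[OF closed_Collect_le] in simp)
qed

lemma cesaro_vimage_measure_cluster_point:
  obtains q :: "'a set \<Rightarrow> real"
  where "\<And>A c. (\<And>n. cesaro_vimage_measure P T n A \<le> c) \<Longrightarrow> q A \<le> c"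
    and "\<And>A. 0 \<le> q A" and "q (space M) = 1"
    and "\<And>A B. A \<in> sets M \<Longrightarrow> B \<in> sets M \<Longrightarrow> A \<inter> B = {} \<Longrightarrow> q (A \<union> B) = q A + q B"
    and "\<And>A. q (T -` A \<inter> space M) = q A"
    and "\<And>A. A \<in> invariant_sets M T \<Longrightarrow> q A = P.prob A"
proof -
  let ?\<mu> = "cesaro_vimage_measure P T"
  obtain q where q_le: "\<And>\<phi> \<psi> :: ('a set \<Rightarrow> real) \<Rightarrow> real. continuous_on UNIV \<phi> \<Longrightarrow>
      continuous_on UNIV \<psi> \<Longrightarrow> eventually (\<lambda>n. \<phi> (?\<mu> n) \<le> \<psi> (?\<mu> n)) sequentially \<Longrightarrow> \<phi> q \<le> \<psi> q"
    using cesaro_vimage_measure_limit_point by blast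
  have q_eq: "\<phi> q = \<psi> q"
    if "continuous_on UNIV \<phi>" "continuous_on UNIV \<psi>" "\<And>n. \<phi> (?\<mu> n) = \<psi> (?\<mu> n)"
    for \<phi> \<psi> :: "('a set \<Rightarrow> real) \<Rightarrow> real"
    using q_le[of \<phi> \<psi>] q_le[of \<psi> \<phi>] that by (intro order_antisym) simp_all
  show ?thesis
  proof (rule that)
    show "q A \<le> c" if "\<And>n. ?\<mu> n A \<le> c" for A c
      using q_le[of "\<lambda>f. f A" "\<lambda>_. c"] that by (auto intro!: continuous_intros)
    show "0 \<le> q A" for A
      using q_le[of "\<lambda>_. 0" "\<lambda>f. f A"] cesaro_vimage_measure_bounds
      by (auto intro!: continuous_intros)
    show "q (space M) = 1"
      using q_eq[of "\<lambda>f. f (space M)" "\<lambda>_. 1"] cesaro_vimage_measure_space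
      by (auto intro!: continuous_intros)
    show "q (A \<union> B) = q A + q B" if "A \<in> sets M" "B \<in> sets M" "A \<inter> B = {}" for A B
      using q_eq[of "\<lambda>f. f (A \<union> B)" "\<lambda>f. f A + f B"] cesaro_vimage_measure_Un[OF that]
      by (simp add: continuous_on_add)
    show "q A = P.prob A" if "A \<in> invariant_sets M T" for A
      using q_eq[of "\<lambda>f. f A" "\<lambda>_. P.prob A"] cesaro_vimage_measure_invariant_set[OF that]
      by (auto intro!: continuous_intros)
    have "\<bar>q (T -` A \<inter> space M) - q A\<bar> \<le> e" if "e > 0" for A e
    proof (rule q_le[of "\<lambda>f. \<bar>f (T -` A \<inter> space M) - f A\<bar>" "\<lambda>_. e"])
      have "eventually (\<lambda>n. inverse (real (Suc n)) < e) sequentially"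
        using order_tendstoD(2)[OF LIMSEQ_inverse_real_of_nat that] .
      then show "eventually (\<lambda>n. \<bar>?\<mu> n (T -` A \<inter> space M) - ?\<mu> n A\<bar> \<le> e) sequentially"
        by eventually_elim (use cesaro_vimage_measure_vimage in \<open>fastforce intro: order_trans\<close>)
    qed (auto intro!: continuous_intros)
    then show "q (T -` A \<inter> space M) = q A" for A
      using field_le_epsilon[of "\<bar>q (T -` A \<inter> space M) - q A\<bar>" 0] by simp
  qed
qed

end

lemma invariant_extension:
  assumes T_meas: "T \<in> measurable M M"
    and V_cont: "upper_continuous M V"
    and V_inv: "V_invariant M T V"
    and P_in: "P \<in> dominated_probs M V"
  obtains Q where "Q \<in> invariant_dominated_probs M T V"
    "\<And>A. A \<in> invariant_sets M T \<Longrightarrow> measure Q A = measure P A"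
proof -
  obtain q where q_le: "\<And>A c. (\<And>n. cesaro_vimage_measure P T n A \<le> c) \<Longrightarrow> q A \<le> c"
    and q_nonneg: "\<And>A. 0 \<le> q A" and q_space: "q (space M) = 1"
    and q_Un: "\<And>A B. A \<in> sets M \<Longrightarrow> B \<in> sets M \<Longrightarrow> A \<inter> B = {} \<Longrightarrow> q (A \<union> B) = q A + q B"
    and q_invariant: "\<And>A. q (T -` A \<inter> space M) = q A"
    and q_P: "\<And>A. A \<in> invariant_sets M T \<Longrightarrow> q A = measure P A"
    using cesaro_vimage_measure_cluster_point[OF T_meas dominated_probsD(1,2)[OF P_in]] by blast
  have q_le_V: "q A \<le> V A" if "A \<in> sets M" for A
    using q_le cesaro_vimage_measure_le_V[OF T_meas dominated_probsD(1,2)[OF P_in] P_in V_inv that]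
    by blast
  obtain Q where Q: "prob_space Q" "sets Q = sets M" "\<And>A. A \<in> sets M \<Longrightarrow> measure Q A = q A"
    using dominated_additive_prob[OF V_cont q_nonneg q_le_V q_Un q_space] by blast
  have space_Q: "space Q = space M"
    using Q(2) by (rule sets_eq_imp_space_eq)
  show ?thesis
  proof (rule that)
    show "Q \<in> invariant_dominated_probs M T V"
      unfolding invariant_dominated_probs_def dominated_probs_def prob_invariant_def
      using Q space_Q q_invariant measurable_sets[OF T_meas] q_le_V by auto
    show "measure Q A = measure P A" if "A \<in> invariant_sets M T" for A
      using that Q(3) q_P by (auto simp: invariant_sets_def)
  qed
qed

section \<open>Birkhoff averages\<close>

definition birkhoff_avg :: "('a \<Rightarrow> 'a) \<Rightarrow> ('a \<Rightarrow> real) \<Rightarrow> nat \<Rightarrow> 'a \<Rightarrow> real" where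
  "birkhoff_avg T g n x = (\<Sum>k<n. g ((T ^^ k) x)) / real n"

text \<open>For bounded \<open>g\<close> the limsup is finite, so nothing is lost by \<open>real_of_ereal\<close> (which sends
  \<open>\<plusminus>\<infinity>\<close> to \<open>0\<close>).\<close>

definition birkhoff_limsup :: "('a \<Rightarrow> 'a) \<Rightarrow> ('a \<Rightarrow> real) \<Rightarrow> 'a \<Rightarrow> real" where
  "birkhoff_limsup T g x = real_of_ereal (limsup (\<lambda>n. ereal (birkhoff_avg T g n x)))"

lemma birkhoff_avg_Suc:
  assumes "n > 0"
  shows "birkhoff_avg T g (Suc n) x = (g x + real n * birkhoff_avg T g n (T x)) / real (Suc n)"
proof -
  have "(\<Sum>k<Suc n. g ((T ^^ k) x)) = g x + (\<Sum>k<n. g ((T ^^ k) (T x)))"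
    unfolding sum.lessThan_Suc_shift by (simp add: funpow_swap1)
  then show ?thesis using assms by (simp add: birkhoff_avg_def)
qed

lemma birkhoff_avg_uminus: "birkhoff_avg T (\<lambda>y. - g y) n x = - birkhoff_avg T g n x"
  by (simp add: birkhoff_avg_def sum_negf)

lemma measurable_birkhoff_avg [measurable]:
  assumes [measurable]: "T \<in> measurable M M" "g \<in> borel_measurable M"
  shows "birkhoff_avg T g n \<in> borel_measurable M"
  unfolding birkhoff_avg_def by measurable

lemma measurable_birkhoff_limsup [measurable]:
  assumes [measurable]: "T \<in> measurable M M" "g \<in> borel_measurable M"
  shows "birkhoff_limsup T g \<in> borel_measurable M"
  unfolding birkhoff_limsup_def by measurable

context
  fixes M :: "'a measure" and T :: "'a \<Rightarrow> 'a" and g :: "'a \<Rightarrow> real" and B :: real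
  assumes T_meas: "T \<in> measurable M M" and bounded: "\<And>y. y \<in> space M \<Longrightarrow> \<bar>g y\<bar> \<le> B"
begin

lemma birkhoff_avg_bounded:
  assumes "x \<in> space M"
  shows "\<bar>birkhoff_avg T g n x\<bar> \<le> B"
proof (cases "n = 0")
  case True
  then show ?thesis using bounded[OF assms] by (simp add: birkhoff_avg_def)
next
  case False
  have "\<bar>\<Sum>k<n. g ((T ^^ k) x)\<bar> \<le> (\<Sum>k<n. \<bar>g ((T ^^ k) x)\<bar>)"
    by (rule sum_abs)
  also have "\<dots> \<le> (\<Sum>k<n. B)"
    by (intro sum_mono bounded funpow_in_space[OF T_meas assms])
  finally show ?thesis using False by (simp add: birkhoff_avg_def abs_divide field_simps)
qed

lemma limsup_birkhoff_avg_bounds: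
  assumes "x \<in> space M"
  shows "limsup (\<lambda>n. ereal (birkhoff_avg T g n x)) \<le> ereal B"
    and "ereal (- B) \<le> limsup (\<lambda>n. ereal (birkhoff_avg T g n x))"
proof -
  have "- B \<le> birkhoff_avg T g n x" "birkhoff_avg T g n x \<le> B" for n
    using birkhoff_avg_bounded[OF assms, of n] by (simp_all add: abs_le_iff)
  then show "limsup (\<lambda>n. ereal (birkhoff_avg T g n x)) \<le> ereal B"
    and "ereal (- B) \<le> limsup (\<lambda>n. ereal (birkhoff_avg T g n x))"
    by (simp_all add: Limsup_bounded le_Limsup)
qed

lemma limsup_birkhoff_avg:
  assumes "x \<in> space M"
  shows "limsup (\<lambda>n. ereal (birkhoff_avg T g n x)) = ereal (birkhoff_limsup T g x)"
  using limsup_birkhoff_avg_bounds[OF assms] unfolding birkhoff_limsup_def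
  by (cases "limsup (\<lambda>n. ereal (birkhoff_avg T g n x))") auto

lemma birkhoff_limsup_bounded:
  assumes "x \<in> space M"
  shows "\<bar>birkhoff_limsup T g x\<bar> \<le> B"
  using limsup_birkhoff_avg_bounds[OF assms] unfolding limsup_birkhoff_avg[OF assms]
  by (simp add: abs_le_iff)

lemma birkhoff_avg_ge_birkhoff_limsup:
  assumes "x \<in> space M" "e > 0"
  obtains n where "n \<ge> 1" "birkhoff_limsup T g x - e \<le> birkhoff_avg T g n x"
proof -
  have "\<not> eventually (\<lambda>n. birkhoff_avg T g n x \<le> birkhoff_limsup T g x - e) sequentially"
  proof
    assume "eventually (\<lambda>n. birkhoff_avg T g n x \<le> birkhoff_limsup T g x - e) sequentially"
    then have "limsup (\<lambda>n. ereal (birkhoff_avg T g n x)) \<le> ereal (birkhoff_limsup T g x - e)"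
      by (intro Limsup_bounded) simp
    then show False
      using limsup_birkhoff_avg[OF assms(1)] assms(2) by simp
  qed
  then have "\<not> (\<forall>n\<ge>1. birkhoff_avg T g n x \<le> birkhoff_limsup T g x - e)"
    unfolding eventually_sequentially by blast
  then show thesis
    using that by (force simp: not_le)
qed

lemma birkhoff_limsup_shift:
  assumes x: "x \<in> space M"
  shows "birkhoff_limsup T g (T x) = birkhoff_limsup T g x"
proof -
  have Tx: "T x \<in> space M" using measurable_space[OF T_meas x] .
  define a where "a n = birkhoff_avg T g (Suc n) x" for n
  define b where "b n = birkhoff_avg T g n (T x)" for n
  have "\<bar>a n - b n\<bar> \<le> 2 * B * inverse (real (Suc n))" for n
  proof (cases "n = 0")
    case True
    then show ?thesis
      using bounded[OF x] by (simp add: a_def b_def birkhoff_avg_def)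
  next
    case False
    then have "a n - b n = (g x - b n) / real (Suc n)"
      by (simp add: a_def b_def birkhoff_avg_Suc field_simps)
    moreover have "\<bar>g x - b n\<bar> \<le> 2 * B"
      using bounded[OF x] birkhoff_avg_bounded[OF Tx, of n] by (simp add: b_def)
    ultimately show ?thesis
      by (simp add: divide_inverse abs_mult mult_right_mono)
  qed
  then have "(\<lambda>n. a n - b n) \<longlonglongrightarrow> 0"
    by (intro tendsto_0_le[OF tendsto_mult_right_zero[OF LIMSEQ_inverse_real_of_nat], of _ 1 "2 * B"])
      (simp add: always_eventually mult.commute)
  then have a_b: "(\<lambda>n. ereal (a n - b n)) \<longlonglongrightarrow> ereal 0"
    by (intro tendsto_intros)
  have "ereal (birkhoff_limsup T g x) = limsup (\<lambda>n. ereal (a n))"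
    unfolding a_def limsup_birkhoff_avg[OF x, symmetric]
    using limsup_shift[of "\<lambda>n. ereal (birkhoff_avg T g n x)"] by simp
  also have "\<dots> = limsup (\<lambda>n. ereal (a n - b n) + ereal (b n))"
    by simp
  also have "\<dots> = ereal 0 + limsup (\<lambda>n. ereal (b n))"
    by (rule ereal_limsup_lim_add[OF a_b]) simp
  also have "\<dots> = ereal (birkhoff_limsup T g (T x))"
    unfolding b_def using limsup_birkhoff_avg[OF Tx] by simp
  finally show ?thesis by simp
qed

lemma birkhoff_limsup_funpow:
  assumes "x \<in> space M"
  shows "birkhoff_limsup T g ((T ^^ k) x) = birkhoff_limsup T g x"
proof (induction k)
  case (Suc k)
  then show ?case
    using birkhoff_limsup_shift[OF funpow_in_space[OF T_meas assms, of k]] by simp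
qed simp

lemma birkhoff_sum_block_nonneg:
  assumes y: "y \<in> space M" and e: "0 < e"
    and g'_ge: "\<And>x. x \<in> space M \<Longrightarrow> g x \<le> g' x"
    and g'_ge_limsup: "\<And>x. x \<in> space M \<Longrightarrow>
      \<forall>n\<in>{1..Suc N}. birkhoff_avg T g n x < birkhoff_limsup T g x - e \<Longrightarrow> birkhoff_limsup T g x \<le> g' x"
  shows "\<exists>n. 1 \<le> n \<and> n \<le> Suc N \<and>
           0 \<le> (\<Sum>k<n. g' ((T ^^ k) y) - birkhoff_limsup T g ((T ^^ k) y) + e)"
proof (cases "\<forall>n\<in>{1..Suc N}. birkhoff_avg T g n y < birkhoff_limsup T g y - e")
  case True
  then show ?thesis
    using g'_ge_limsup[OF y] e by (intro exI[of _ 1]) simp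
next
  case False
  then obtain n where n: "n \<in> {1..Suc N}" "birkhoff_limsup T g y - e \<le> birkhoff_avg T g n y"
    by auto
  have "real n * (birkhoff_limsup T g y - e) \<le> (\<Sum>k<n. g ((T ^^ k) y))"
    using n mult_left_mono[OF n(2), of "real n"] by (simp add: birkhoff_avg_def)
  also have "\<dots> \<le> (\<Sum>k<n. g' ((T ^^ k) y))"
    using g'_ge[OF funpow_in_space[OF T_meas y]] by (intro sum_mono)
  finally show ?thesis
    using n(1) birkhoff_limsup_funpow[OF y]
    by (auto simp: sum_subtractf sum.distrib algebra_simps)
qed

end

context
  fixes M :: "'a measure" and T :: "'a \<Rightarrow> 'a" and g :: "'a \<Rightarrow> real" and B :: real and x :: 'a
  assumes T_meas: "T \<in> measurable M M" and bounded: "\<And>y. y \<in> space M \<Longrightarrow> \<bar>g y\<bar> \<le> B"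
    and x: "x \<in> space M"
begin

lemma liminf_birkhoff_avg:
  "liminf (\<lambda>n. ereal (birkhoff_avg T g n x)) = ereal (- birkhoff_limsup T (\<lambda>y. - g y) x)"
proof -
  have "ereal (birkhoff_limsup T (\<lambda>y. - g y) x) = limsup (\<lambda>n. - ereal (birkhoff_avg T g n x))"
    using limsup_birkhoff_avg[where g = "\<lambda>y. - g y" and B = B, OF T_meas _ x] bounded
    by (simp add: birkhoff_avg_uminus)
  also have "\<dots> = - liminf (\<lambda>n. ereal (birkhoff_avg T g n x))"
    by (rule ereal_Limsup_uminus)
  finally show ?thesis
    by (metis ereal_uminus_uminus uminus_ereal.simps(1))
qed

lemma birkhoff_limsup_uminus_le: "- birkhoff_limsup T (\<lambda>y. - g y) x \<le> birkhoff_limsup T g x"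
  using Liminf_le_Limsup[of sequentially "\<lambda>n. ereal (birkhoff_avg T g n x)"]
  by (simp add: liminf_birkhoff_avg limsup_birkhoff_avg[OF T_meas bounded x])

lemma birkhoff_avg_LIMSEQ:
  assumes "- birkhoff_limsup T (\<lambda>y. - g y) x = birkhoff_limsup T g x"
  shows "(\<lambda>n. birkhoff_avg T g n x) \<longlonglongrightarrow> birkhoff_limsup T g x"
  by (rule limsup_le_liminf_real)
    (simp_all add: liminf_birkhoff_avg limsup_birkhoff_avg[OF T_meas bounded x] assms)

end

section \<open>The maximal inequality for invariant probabilities\<close>

lemma sum_lessThan_add:
  fixes f :: "nat \<Rightarrow> 'b::comm_monoid_add"
  shows "(\<Sum>k<n + m. f k) = (\<Sum>k<n. f k) + (\<Sum>k<m. f (n + k))"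
  by (induction m) (simp_all add: add.assoc)

lemma birkhoff_sum_lower_bound_of_blocks:
  fixes S :: "'a \<Rightarrow> 'a" and h :: "'a \<Rightarrow> real"
  assumes S: "\<And>y. y \<in> Y \<Longrightarrow> S y \<in> Y"
    and h_ge: "\<And>y. y \<in> Y \<Longrightarrow> - C \<le> h y" and "0 \<le> C"
    and block: "\<And>y. y \<in> Y \<Longrightarrow> \<exists>n. 1 \<le> n \<and> n \<le> N \<and> 0 \<le> (\<Sum>k<n. h ((S ^^ k) y))"
    and "y \<in> Y"
  shows "- C * real N \<le> (\<Sum>k<L. h ((S ^^ k) y))"
  using \<open>y \<in> Y\<close>
proof (induction L arbitrary: y rule: less_induct)
  case (less L)
  have S_funpow: "(S ^^ k) z \<in> Y" if "z \<in> Y" for k z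
    using that by (induction k) (auto intro: S)
  show ?case
  proof (cases "L \<le> N")
    case True
    have "- C * real N \<le> - C * real L"
      using True \<open>0 \<le> C\<close> by (simp add: mult_left_mono)
    also have "\<dots> = (\<Sum>k<L. - C)" by simp
    also have "\<dots> \<le> (\<Sum>k<L. h ((S ^^ k) y))"
      by (intro sum_mono h_ge S_funpow less.prems)
    finally show ?thesis .
  next
    case False
    obtain n where n: "1 \<le> n" "n \<le> N" "0 \<le> (\<Sum>k<n. h ((S ^^ k) y))"
      using block[OF less.prems] by blast
    have "(\<Sum>k<L. h ((S ^^ k) y)) = (\<Sum>k<n. h ((S ^^ k) y)) + (\<Sum>k<L - n. h ((S ^^ k) ((S ^^ n) y)))"
      using sum_lessThan_add[of "\<lambda>k. h ((S ^^ k) y)" n "L - n"] n False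
      by (simp add: funpow_add add.commute)
    moreover have "- C * real N \<le> (\<Sum>k<L - n. h ((S ^^ k) ((S ^^ n) y)))"
      using n False by (intro less.IH S_funpow less.prems) auto
    ultimately show ?thesis using n(3) by linarith
  qed
qed

context
  fixes M :: "'a measure" and T :: "'a \<Rightarrow> 'a"
  assumes prob: "prob_space M" and T_meas [measurable]: "T \<in> measurable M M" and invariant: "prob_invariant M T"
begin

interpretation prob_space M by (rule prob)

lemma distr_prob_invariant: "distr M M T = M"
proof (rule measure_eqI)
  fix A assume "A \<in> sets (distr M M T)"
  then have A: "A \<in> sets M" by simp
  then have "emeasure (distr M M T) A = measure M (T -` A \<inter> space M)"
    using T_meas by (simp add: emeasure_distr emeasure_eq_measure measurable_sets)
  also have "\<dots> = measure M A"
    using invariant A by (simp add: prob_invariant_def)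
  finally show "emeasure (distr M M T) A = emeasure M A"
    using A by (simp add: emeasure_eq_measure)
qed simp

lemma integral_funpow_prob_invariant:
  fixes h :: "'a \<Rightarrow> real"
  assumes [measurable]: "h \<in> borel_measurable M"
  shows "integral\<^sup>L M (\<lambda>x. h ((T ^^ k) x)) = integral\<^sup>L M h"
proof (induction k)
  case (Suc k)
  have "integral\<^sup>L M (\<lambda>x. h ((T ^^ Suc k) x)) = integral\<^sup>L (distr M M T) (\<lambda>x. h ((T ^^ k) x))"
    using T_meas by (simp add: integral_distr funpow_swap1)
  then show ?case
    using Suc by (simp add: distr_prob_invariant)
qed simp

lemma integral_nonneg_of_birkhoff_sums_bounded_below:
  fixes h :: "'a \<Rightarrow> real"
  assumes [measurable]: "h \<in> borel_measurable M"
    and h_bounded: "\<And>x. x \<in> space M \<Longrightarrow> \<bar>h x\<bar> \<le> C"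
    and sums_ge: "\<And>L x. x \<in> space M \<Longrightarrow> - D \<le> (\<Sum>k<L. h ((T ^^ k) x))"
  shows "0 \<le> integral\<^sup>L M h"
proof (rule ccontr)
  assume "\<not> 0 \<le> integral\<^sup>L M h"
  then obtain L :: nat where L: "D < real L * (- integral\<^sup>L M h)"
    by (metis neg_0_less_iff_less not_le pos_divide_less_eq reals_Archimedean2)
  have integrable_funpow: "integrable M (\<lambda>x. h ((T ^^ k) x))" for k
    using h_bounded funpow_in_space[OF T_meas] by (intro integrable_bounded_real) auto
  have "- D = integral\<^sup>L M (\<lambda>x. - D)"
    by (simp add: prob_space)
  also have "\<dots> \<le> integral\<^sup>L M (\<lambda>x. \<Sum>k<L. h ((T ^^ k) x))"
    using integrable_funpow sums_ge by (intro integral_mono) auto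
  also have "\<dots> = real L * integral\<^sup>L M h"
    using integrable_funpow by (simp add: integral_funpow_prob_invariant)
  finally show False using L by simp
qed

end

context
  fixes M :: "'a measure" and T :: "'a \<Rightarrow> 'a" and g :: "'a \<Rightarrow> real" and B :: real
  assumes prob: "prob_space M" and T_meas [measurable]: "T \<in> measurable M M"
    and invariant: "prob_invariant M T"
    and g_meas [measurable]: "g \<in> borel_measurable M"
    and bounded: "\<And>x. x \<in> space M \<Longrightarrow> \<bar>g x\<bar> \<le> B"
begin

interpretation prob_space M by (rule prob)

text \<open>The Katznelson--Weiss argument: once \<open>g\<close> is raised to its bound \<open>B\<close> on the set where no average
  up to time \<open>N + 1\<close> comes within \<open>e\<close> of the limsup, every orbit decomposes into blocks of
  length \<open>\<le> N + 1\<close> on which \<open>g' - birkhoff_limsup T g + e\<close> has nonnegative sum. The price of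
  raising \<open>g\<close> is at most \<open>2 B\<close> times the measure of that set, which vanishes as \<open>N \<rightarrow> \<infinity>\<close>.\<close>

lemma integral_birkhoff_limsup_le_dominating:
  fixes N :: nat and g' :: "'a \<Rightarrow> real"
  assumes e: "e > 0" and g'_meas [measurable]: "g' \<in> borel_measurable M"
    and g'_bounded: "\<And>x. x \<in> space M \<Longrightarrow> \<bar>g' x\<bar> \<le> B"
    and g'_ge: "\<And>x. x \<in> space M \<Longrightarrow> g x \<le> g' x"
    and g'_ge_limsup: "\<And>x. x \<in> space M \<Longrightarrow>
      \<forall>n\<in>{1..Suc N}. birkhoff_avg T g n x < birkhoff_limsup T g x - e \<Longrightarrow> birkhoff_limsup T g x \<le> g' x"
  shows "integral\<^sup>L M (birkhoff_limsup T g) \<le> integral\<^sup>L M g' + e"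
proof -
  let ?f = "birkhoff_limsup T g"
  define h where "h = (\<lambda>x. g' x - ?f x + e)"
  have B: "0 \<le> B"
    using bounded not_empty by fastforce
  have f_bounded: "\<bar>?f x\<bar> \<le> B" if "x \<in> space M" for x
    by (rule birkhoff_limsup_bounded[OF T_meas bounded that])
  have "0 \<le> integral\<^sup>L M h"
  proof (rule integral_nonneg_of_birkhoff_sums_bounded_below[OF prob T_meas invariant])
    show "h \<in> borel_measurable M"
      unfolding h_def by measurable
    show "\<bar>h x\<bar> \<le> 2 * B + e" if "x \<in> space M" for x
      using g'_bounded[OF that] f_bounded[OF that] e by (simp add: h_def abs_le_iff)
    have h_ge: "- (2 * B) \<le> h x" if "x \<in> space M" for x
      using g'_bounded[OF that] f_bounded[OF that] e by (simp add: h_def abs_le_iff)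
    have blocks: "\<exists>n. 1 \<le> n \<and> n \<le> Suc N \<and> 0 \<le> (\<Sum>k<n. h ((T ^^ k) y))" if "y \<in> space M" for y
      unfolding h_def by (rule birkhoff_sum_block_nonneg[OF T_meas bounded that e g'_ge g'_ge_limsup])
    show "- (2 * B * real (Suc N)) \<le> (\<Sum>k<L. h ((T ^^ k) x))" if "x \<in> space M" for L x
      using birkhoff_sum_lower_bound_of_blocks[OF measurable_space[OF T_meas] h_ge _ blocks that] B
      by simp
  qed
  moreover have "integrable M ?f" "integrable M g'"
    using f_bounded g'_bounded by (auto intro!: integrable_bounded_real)
  then have "integral\<^sup>L M h = integral\<^sup>L M g' - integral\<^sup>L M ?f + e"
    by (simp add: h_def prob_space)
  ultimately show ?thesis
    by linarith
qed

lemma integral_birkhoff_limsup_le_with_error: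
  fixes N :: nat
  assumes e: "e > 0"
  defines "E \<equiv> {x \<in> space M. \<forall>n\<in>{1..Suc N}. birkhoff_avg T g n x < birkhoff_limsup T g x - e}"
  shows "integral\<^sup>L M (birkhoff_limsup T g) \<le> integral\<^sup>L M g + e + 2 * B * measure M E"
proof -
  have E [measurable]: "E \<in> sets M"
    unfolding E_def by measurable
  define g' where "g' x = g x + (B - g x) * indicator E x" for x
  have g'_meas [measurable]: "g' \<in> borel_measurable M"
    unfolding g'_def by measurable
  have B: "0 \<le> B"
    using bounded not_empty by fastforce
  have g'_bounded: "\<bar>g' x\<bar> \<le> B" and g'_ge: "g x \<le> g' x"
    and g'_le: "g' x \<le> g x + 2 * B * indicator E x" if "x \<in> space M" for x
    using bounded[OF that] B by (auto simp: g'_def indicator_def)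
  have "birkhoff_limsup T g x \<le> g' x"
    if "x \<in> space M" "\<forall>n\<in>{1..Suc N}. birkhoff_avg T g n x < birkhoff_limsup T g x - e" for x
    using birkhoff_limsup_bounded[OF T_meas bounded that(1)] that by (simp add: g'_def E_def abs_le_iff)
  then have ls_le: "integral\<^sup>L M (birkhoff_limsup T g) \<le> integral\<^sup>L M g' + e"
    using integral_birkhoff_limsup_le_dominating[where N = N, OF e g'_meas g'_bounded g'_ge] by blast
  have g_integrable: "integrable M g" and g'_integrable: "integrable M g'"
    using bounded g'_bounded by (auto intro!: integrable_bounded_real)
  moreover have "integrable M (\<lambda>x. g x + 2 * B * indicator E x)"
    using g_integrable by (simp add: emeasure_eq_measure)
  then have "integral\<^sup>L M g' \<le> integral\<^sup>L M (\<lambda>x. g x + 2 * B * indicator E x)"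
    using g'_integrable g'_le by (intro integral_mono) auto
  moreover have "\<dots> = integral\<^sup>L M g + 2 * B * measure M E"
    using g_integrable by (simp add: emeasure_eq_measure)
  ultimately show ?thesis
    using ls_le by linarith
qed

lemma integral_birkhoff_limsup_le: "integral\<^sup>L M (birkhoff_limsup T g) \<le> integral\<^sup>L M g"
proof (rule field_le_epsilon)
  fix e :: real assume e: "e > 0"
  define E where "E N = {x \<in> space M. \<forall>n\<in>{1..Suc N}. birkhoff_avg T g n x < birkhoff_limsup T g x - e}"
    for N
  have E_sets: "range E \<subseteq> sets M"
  proof (clarify)
    fix N show "E N \<in> sets M" unfolding E_def by measurable
  qed
  have "decseq E"
    unfolding decseq_def E_def by auto
  moreover have "(\<Inter>N. E N) = {}"
  proof (intro equals0I)
    fix x assume "x \<in> (\<Inter>N. E N)"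
    then have x: "x \<in> space M"
      and below: "\<And>N n. n \<in> {1..Suc N} \<Longrightarrow> birkhoff_avg T g n x < birkhoff_limsup T g x - e"
      by (auto simp: E_def)
    obtain n where "n \<ge> 1" "birkhoff_limsup T g x - e \<le> birkhoff_avg T g n x"
      using birkhoff_avg_ge_birkhoff_limsup[where g = g and B = B, OF T_meas bounded x e] .
    then show False
      using below[of n "n - 1"] by simp
  qed
  ultimately have "(\<lambda>N. measure M (E N)) \<longlonglongrightarrow> 0"
    using finite_Lim_measure_decseq[OF E_sets] by simp
  then have "(\<lambda>N. integral\<^sup>L M g + e + 2 * B * measure M (E N)) \<longlonglongrightarrow> integral\<^sup>L M g + e"
    by (auto intro!: tendsto_eq_intros)
  moreover have "integral\<^sup>L M (birkhoff_limsup T g) \<le> integral\<^sup>L M g + e + 2 * B * measure M (E N)" for N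
    unfolding E_def by (rule integral_birkhoff_limsup_le_with_error[OF e])
  ultimately show "integral\<^sup>L M (birkhoff_limsup T g) \<le> integral\<^sup>L M g + e"
    by (intro LIMSEQ_le_const) auto
qed

end

lemma AE_birkhoff_limsup_uminus_prob_invariant:
  fixes g :: "'a \<Rightarrow> real"
  assumes prob: "prob_space M" and T_meas [measurable]: "T \<in> measurable M M"
    and invariant: "prob_invariant M T"
    and g_meas [measurable]: "g \<in> borel_measurable M"
    and bounded: "\<And>x. x \<in> space M \<Longrightarrow> \<bar>g x\<bar> \<le> B"
  shows "AE x in M. - birkhoff_limsup T (\<lambda>y. - g y) x = birkhoff_limsup T g x"
proof -
  interpret prob_space M by (rule prob)
  have bounded_uminus: "\<And>x. x \<in> space M \<Longrightarrow> \<bar>- g x\<bar> \<le> B"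
    using bounded by simp
  define d where "d = (\<lambda>x. birkhoff_limsup T g x + birkhoff_limsup T (\<lambda>y. - g y) x)"
  have "0 \<le> d x" if "x \<in> space M" for x
    using birkhoff_limsup_uminus_le[where g = g, OF T_meas bounded that] by (simp add: d_def)
  then have d_nonneg: "AE x in M. 0 \<le> d x"
    by (rule AE_I2)
  have ls_integrable: "integrable M (birkhoff_limsup T g)" "integrable M (birkhoff_limsup T (\<lambda>y. - g y))"
    using birkhoff_limsup_bounded[where g = g, OF T_meas bounded]
      birkhoff_limsup_bounded[where g = "\<lambda>y. - g y", OF T_meas bounded_uminus]
    by (auto intro!: integrable_bounded_real)
  then have d_integrable: "integrable M d"
    by (simp add: d_def)
  have "integral\<^sup>L M d \<le> integral\<^sup>L M g + integral\<^sup>L M (\<lambda>y. - g y)"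
    using ls_integrable
      integral_birkhoff_limsup_le[where g = g, OF prob T_meas invariant g_meas bounded]
      integral_birkhoff_limsup_le[where g = "\<lambda>y. - g y", OF prob T_meas invariant _ bounded_uminus]
    by (simp add: d_def)
  then have "integral\<^sup>L M d = 0"
    using integral_nonneg_AE[OF d_nonneg] by simp
  then have "AE x in M. d x = 0"
    using integral_nonneg_eq_0_iff_AE[OF d_integrable d_nonneg] by blast
  then show ?thesis
    by eventually_elim (simp add: d_def)
qed

section \<open>Birkhoff limits under the dominated probabilities\<close>

lemma integral_birkhoff_limsup_le_invariant_dominated:
  fixes g :: "'a \<Rightarrow> real"
  assumes T_meas: "T \<in> measurable M M" and Q: "Q \<in> invariant_dominated_probs M T V"
    and g_meas: "g \<in> borel_measurable M" and bounded: "\<And>x. x \<in> space M \<Longrightarrow> \<bar>g x\<bar> \<le> B"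
  shows "integral\<^sup>L Q (birkhoff_limsup T g) \<le> integral\<^sup>L Q g"
  using assms invariant_dominated_probsD[OF Q]
  by (intro integral_birkhoff_limsup_le) (simp_all add: measurable_invariant_dominated[OF Q])

context
  fixes M :: "'a measure" and T :: "'a \<Rightarrow> 'a" and V :: "'a set \<Rightarrow> real"
    and P :: "'a measure" and g :: "'a \<Rightarrow> real" and B :: real
  assumes T_meas [measurable]: "T \<in> measurable M M"
    and V_cont: "upper_continuous M V"
    and V_inv: "V_invariant M T V"
    and P_in: "P \<in> dominated_probs M V"
    and g_meas [measurable]: "g \<in> borel_measurable M"
    and bounded: "\<And>x. x \<in> space M \<Longrightarrow> \<bar>g x\<bar> \<le> B"
begin

interpretation P: prob_space P
  using dominated_probsD(1)[OF P_in] .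

lemma AE_birkhoff_limsup_uminus:
  "AE x in P. - birkhoff_limsup T (\<lambda>y. - g y) x = birkhoff_limsup T g x"
proof -
  have bounded_uminus: "\<And>x. x \<in> space M \<Longrightarrow> \<bar>- g x\<bar> \<le> B"
    using bounded by simp
  define D where "D = {x \<in> space M. birkhoff_limsup T g x \<noteq> - birkhoff_limsup T (\<lambda>y. - g y) x}"
  have D_sets: "D \<in> sets M"
    unfolding D_def by measurable
  have "D \<in> invariant_sets M T"
    using D_sets birkhoff_limsup_shift[where g = g, OF T_meas bounded]
      birkhoff_limsup_shift[where g = "\<lambda>y. - g y", OF T_meas bounded_uminus] measurable_space[OF T_meas]
    by (auto simp: D_def invariant_sets_def)
  moreover obtain Q where Q: "Q \<in> invariant_dominated_probs M T V"
    and "\<And>A. A \<in> invariant_sets M T \<Longrightarrow> measure Q A = measure P A"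
    using invariant_extension[OF T_meas V_cont V_inv P_in] by blast
  moreover have "measure Q D = 0"
  proof -
    note Q_facts = invariant_dominated_probsD[OF Q]
    interpret Q: prob_space Q by (rule Q_facts(1))
    have "AE x in Q. - birkhoff_limsup T (\<lambda>y. - g y) x = birkhoff_limsup T g x"
      using bounded Q_facts
      by (intro AE_birkhoff_limsup_uminus_prob_invariant) (simp_all add: measurable_invariant_dominated[OF Q])
    then have "AE x in Q. x \<notin> D"
      by eventually_elim (auto simp: D_def)
    then show ?thesis
      using Q.prob_eq_0[of D] D_sets Q_facts(2) by simp
  qed
  ultimately have "P.prob D = 0"
    by simp
  then have "AE x in P. x \<notin> D"
    using P.prob_eq_0[of D] D_sets dominated_probsD(2)[OF P_in] by simp
  moreover have "AE x in P. x \<in> space M"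
    using AE_space[of P] dominated_probsD(3)[OF P_in] by simp
  ultimately show ?thesis
    by eventually_elim (auto simp: D_def)
qed

lemma AE_birkhoff_avg_LIMSEQ:
  "AE x in P. (\<lambda>n. birkhoff_avg T g n x) \<longlonglongrightarrow> birkhoff_limsup T g x"
  using AE_birkhoff_limsup_uminus AE_space[of P]
  by eventually_elim (simp add: birkhoff_avg_LIMSEQ[OF T_meas bounded] dominated_probsD(3)[OF P_in])

lemma measure_invariant_superlevel_le:
  assumes R: "R \<in> dominated_probs M V" and A: "A \<in> invariant_sets M T"
    and above: "\<And>x. x \<in> A \<Longrightarrow> a \<le> birkhoff_limsup T g x"
  shows "(a + B) * measure R A - B \<le> upper_exp0 M T V g"
proof -
  obtain Q where Q: "Q \<in> invariant_dominated_probs M T V"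
    and Q_R: "\<And>A. A \<in> invariant_sets M T \<Longrightarrow> measure Q A = measure R A"
    using invariant_extension[OF T_meas V_cont V_inv R] by blast
  note Q_facts = invariant_dominated_probsD[OF Q]
  interpret Q: prob_space Q by (rule Q_facts(1))
  have ls_bounded: "\<bar>birkhoff_limsup T g x\<bar> \<le> B" if "x \<in> space M" for x
    using birkhoff_limsup_bounded[where g = g, OF T_meas bounded that] .
  have "(a + B) * measure Q A - B \<le> integral\<^sup>L Q (birkhoff_limsup T g)"
  proof (rule Q.integral_ge_superlevel)
    show "integrable Q (birkhoff_limsup T g)"
      using ls_bounded by (intro integrable_invariant_dominated[OF Q]) auto
    show "A \<in> Q.events"
      using A Q_facts(2) by (simp add: invariant_sets_def)
    show "- B \<le> birkhoff_limsup T g x" if "x \<in> space Q" for x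
      using ls_bounded[of x] that Q_facts(3) by simp
  qed (rule above)
  also have "\<dots> \<le> integral\<^sup>L Q g"
    by (rule integral_birkhoff_limsup_le_invariant_dominated[where g = g, OF T_meas Q g_meas bounded])
  also have "\<dots> \<le> upper_exp0 M T V g"
    by (rule integral_le_upper_exp0[OF Q g_meas bounded])
  finally show ?thesis
    using Q_R[OF A] by simp
qed

lemma upper_exp0_ge: "- B \<le> upper_exp0 M T V g"
  using measure_invariant_superlevel_le[OF P_in, of "{}"] by (simp add: invariant_sets_def)

lemma measure_superlevel_birkhoff_limsup:
  assumes V_def: "\<forall>A\<in>sets M. V A = (SUP Q \<in> dominated_probs M V. measure Q A)"
    and V_erg: "V_ergodic M T V"
    and above: "upper_exp0 M T V g < a"
  shows "measure P {x \<in> space M. a < birkhoff_limsup T g x} = 0"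
proof -
  let ?c = "upper_exp0 M T V g"
  define A where "A = {x \<in> space M. a < birkhoff_limsup T g x}"
  have A_invariant: "A \<in> invariant_sets M T"
    unfolding A_def using birkhoff_limsup_shift[where g = g, OF T_meas bounded]
    by (intro invariant_sets_superlevel) simp_all
  then have A_sets: "A \<in> sets M"
    by (simp add: invariant_sets_def)
  have aB: "0 < a + B"
    using upper_exp0_ge above by simp
  have "V A \<le> (?c + B) / (a + B)"
    unfolding V_def[rule_format, OF A_sets]
  proof (rule cSUP_least)
    show "dominated_probs M V \<noteq> {}"
      using P_in by blast
    show "measure R A \<le> (?c + B) / (a + B)" if "R \<in> dominated_probs M V" for R
      using measure_invariant_superlevel_le[OF that A_invariant, of a] aB
      by (simp add: A_def field_simps)
  qed
  also have "\<dots> < 1"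
    using above aB by simp
  finally have "V A = 0"
    using V_erg A_invariant by (auto simp: V_ergodic_def)
  moreover have "measure P A \<le> V A"
    using P_in A_sets by (simp add: dominated_probs_def)
  ultimately show ?thesis
    unfolding A_def[symmetric] using measure_nonneg[of P A] by linarith
qed

lemma AE_birkhoff_limsup_le_upper_exp0:
  assumes V_def: "\<forall>A\<in>sets M. V A = (SUP Q \<in> dominated_probs M V. measure Q A)"
    and V_erg: "V_ergodic M T V"
  shows "AE x in P. birkhoff_limsup T g x \<le> upper_exp0 M T V g"
proof -
  let ?c = "upper_exp0 M T V g"
  have "AE x in P. birkhoff_limsup T g x \<le> ?c + inverse (real (Suc m))" for m
  proof -
    let ?A = "{x \<in> space M. ?c + inverse (real (Suc m)) < birkhoff_limsup T g x}"
    have "?A \<in> sets M"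
      by measurable
    then have "AE x in P. x \<notin> ?A"
      using measure_superlevel_birkhoff_limsup[OF V_def V_erg, of "?c + inverse (real (Suc m))"]
        P.prob_eq_0[of ?A] dominated_probsD(2)[OF P_in]
      by simp
    moreover have "AE x in P. x \<in> space M"
      using AE_space[of P] dominated_probsD(3)[OF P_in] by simp
    ultimately show ?thesis
      by eventually_elim auto
  qed
  then have "AE x in P. \<forall>m. birkhoff_limsup T g x \<le> ?c + inverse (real (Suc m))"
    by (simp add: AE_all_countable)
  then show ?thesis
  proof eventually_elim
    case (elim x)
    have "(\<lambda>m. ?c + inverse (real (Suc m))) \<longlonglongrightarrow> ?c"
      using tendsto_add[OF tendsto_const LIMSEQ_inverse_real_of_nat, of ?c] by simp
    then show ?case
      using elim by (intro LIMSEQ_le_const) auto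
  qed
qed

end

theorem theorem3p4:
  fixes M :: "'a measure" and T :: "'a \<Rightarrow> 'a" and V :: "'a set \<Rightarrow> real"
    and P :: "'a measure" and \<xi> :: "'a \<Rightarrow> real"
  assumes T_meas: "T \<in> measurable M M"
    and V_def: "\<forall>A\<in>sets M. V A = (SUP Q \<in> dominated_probs M V. measure Q A)"
    and V_cont: "upper_continuous M V"
    and V_inv: "V_invariant M T V"
    and V_erg: "V_ergodic M T V"
    and P_in: "P \<in> dominated_probs M V"
    and \<xi>_meas: "\<xi> \<in> borel_measurable M"
    and \<xi>_bdd: "\<exists>B. \<forall>\<omega>\<in>space M. \<bar>\<xi> \<omega>\<bar> \<le> B"
  shows "AE \<omega> in P.
           convergent (\<lambda>n. (\<Sum>k<n. \<xi> ((T ^^ k) \<omega>)) / real n) \<and>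
           - upper_exp0 M T V (\<lambda>x. - \<xi> x) \<le> lim (\<lambda>n. (\<Sum>k<n. \<xi> ((T ^^ k) \<omega>)) / real n) \<and>
           lim (\<lambda>n. (\<Sum>k<n. \<xi> ((T ^^ k) \<omega>)) / real n) \<le> upper_exp0 M T V \<xi>"
proof -
  obtain B where bounded: "\<And>x. x \<in> space M \<Longrightarrow> \<bar>\<xi> x\<bar> \<le> B"
    using \<xi>_bdd by blast
  have bounded_uminus: "\<And>x. x \<in> space M \<Longrightarrow> \<bar>- \<xi> x\<bar> \<le> B"
    using bounded by simp
  have "AE x in P. birkhoff_limsup T \<xi> x \<le> upper_exp0 M T V \<xi>"
    by (rule AE_birkhoff_limsup_le_upper_exp0[OF T_meas V_cont V_inv P_in \<xi>_meas bounded V_def V_erg])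
  moreover have "AE x in P. birkhoff_limsup T (\<lambda>y. - \<xi> y) x \<le> upper_exp0 M T V (\<lambda>y. - \<xi> y)"
    using \<xi>_meas
    by (intro AE_birkhoff_limsup_le_upper_exp0[OF T_meas V_cont V_inv P_in _ bounded_uminus V_def V_erg])
      measurable
  moreover have "AE x in P. - birkhoff_limsup T (\<lambda>y. - \<xi> y) x = birkhoff_limsup T \<xi> x"
    by (rule AE_birkhoff_limsup_uminus[OF T_meas V_cont V_inv P_in \<xi>_meas bounded])
  moreover have "AE x in P. (\<lambda>n. birkhoff_avg T \<xi> n x) \<longlonglongrightarrow> birkhoff_limsup T \<xi> x"
    by (rule AE_birkhoff_avg_LIMSEQ[OF T_meas V_cont V_inv P_in \<xi>_meas bounded])
  ultimately show ?thesis
  proof eventually_elim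
    case (elim x)
    have "(\<lambda>n. (\<Sum>k<n. \<xi> ((T ^^ k) x)) / real n) = (\<lambda>n. birkhoff_avg T \<xi> n x)"
      by (simp add: birkhoff_avg_def)
    with elim(4) have "convergent (\<lambda>n. (\<Sum>k<n. \<xi> ((T ^^ k) x)) / real n)"
      and "lim (\<lambda>n. (\<Sum>k<n. \<xi> ((T ^^ k) x)) / real n) = birkhoff_limsup T \<xi> x"
      by (auto intro: convergentI limI)
    with elim(1-3) show ?case
      by simp
  qed
qed

end
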